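(* For any $u\in\mathcal{L}PSH^*(\mathbb{C}^n)$, \[ 0<\frac{n}{\sigma_u}\le c_\infty(u)\le\frac{n}{\mathcal{L}_\infty(u)}\le+\infty. \] In particular, for any polynomial map $P:\mathbb{C}^n\to\mathbb{C}^q$ with $\log|P|\in\mathcal{L}PSH^*(\mathbb{C}^n)$, \[ \frac{n}{\deg P}\le c_\infty(P)\le\frac{n}{\mathcal{L}_\infty(P)}. \]
   Context: $\mathcal{L}PSH(\mathbb{C}^n)$: plurisubharmonic $u$ on $\mathbb{C}^n$ with finite logarithmic type $\sigma_u=\limsup_{|z|\to\infty}u(z)/\log|z|$; $\mathcal{L}PSH^*(\mathbb{C}^n)$: those with $u(z)\to+\infty$ as $|z|\to\infty$. $\mathcal{L}_\infty(u)=\liminf_{|z|\to\infty}u(z)/\log|z|$ (with $n/0=+\infty$). $c_\infty(u)=\inf\{c>0:\exists\text{ compact }K,\ \int_{\mathbb{C}^n\setminus K}e^{-2cu}d\lambda<\infty\}$, and $c_\infty(P)=c_\infty(\log|P|)$, $|P|$ the Euclidean norm. For a polynomial map $P=(P_1,\ldots,P_q)$, $\deg P=\max_k\deg P_k$, and $\mathcal{L}_\infty(P)$ is the Łojasiewicz exponent at infinity: the greatest real $l$ such that $|P(z)|\ge C|z|^l$ for some $C>0$ and all large $|z|$. *)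

theory Defs
  imports "HOL-Analysis.Analysis" "HOL-Library.Liminf_Limsup"
begin

text \<open>Points of C^n are vectors of type complex ^ 'n (n = CARD('n));
  Lebesgue measure on C^n = R^(2n) is lebesgue on this Euclidean space.
  Plurisubharmonic functions take values in [-infinity, +infinity), rendered as ereal
  with the value +infinity excluded.\<close>

definition circle_mean :: "(real \<Rightarrow> ereal) \<Rightarrow> ereal" where
  "circle_mean g =
     ereal (1 / (2 * pi)) *
     (enn2ereal (\<integral>\<^sup>+ \<theta>\<in>{0..2*pi}. e2ennreal (max 0 (g \<theta>)) \<partial>lborel)
      - enn2ereal (\<integral>\<^sup>+ \<theta>\<in>{0..2*pi}. e2ennreal (max 0 (- g \<theta>)) \<partial>lborel))"

definition psh :: "(complex ^ 'n \<Rightarrow> ereal) \<Rightarrow> bool" where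
  "psh u \<longleftrightarrow>
     (\<forall>z. u z \<noteq> \<infinity>) \<and>
     (\<exists>z. u z \<noteq> -\<infinity>) \<and>
     (\<forall>z. Limsup (at z) u \<le> u z) \<and>
     (\<forall>a b. u a \<le> circle_mean (\<lambda>\<theta>. u (a + cis \<theta> *s b)))"

definition log_type :: "(complex ^ 'n \<Rightarrow> ereal) \<Rightarrow> ereal" where
  "log_type u = Limsup at_infinity (\<lambda>z. u z / ereal (ln (norm z)))"

definition L_inf :: "(complex ^ 'n \<Rightarrow> ereal) \<Rightarrow> ereal" where
  "L_inf u = Liminf at_infinity (\<lambda>z. u z / ereal (ln (norm z)))"

definition LPSH :: "(complex ^ 'n \<Rightarrow> ereal) set" where
  "LPSH = {u. psh u \<and> \<bar>log_type u\<bar> \<noteq> \<infinity>}"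

definition LPSH_star :: "(complex ^ 'n \<Rightarrow> ereal) set" where
  "LPSH_star = {u. u \<in> LPSH \<and> (u \<longlongrightarrow> \<infinity>) at_infinity}"

definition exp_weight :: "real \<Rightarrow> ereal \<Rightarrow> ennreal" where
  "exp_weight c x = (if x = -\<infinity> then \<infinity> else ennreal (exp (-2 * c * real_of_ereal x)))"

definition c_inf :: "(complex ^ 'n \<Rightarrow> ereal) \<Rightarrow> ereal" where
  "c_inf u = Inf {ereal c | c. c > 0 \<and>
      (\<exists>K. compact K \<and>
         (\<integral>\<^sup>+ z\<in>(UNIV - K). exp_weight c (u z) \<partial>lebesgue) < \<infinity>)}"

text \<open>n / x with the convention n / 0 = +infinity.\<close>
definition n_over :: "nat \<Rightarrow> ereal \<Rightarrow> ereal" where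
  "n_over n x = (if x = 0 then \<infinity> else ereal (real n) / x)"

text \<open>Polynomials in n complex variables, given by finitely supported coefficient functions
  on multi-indices 'n \<Rightarrow> nat.\<close>
definition is_mpoly :: "(('n::finite \<Rightarrow> nat) \<Rightarrow> complex) \<Rightarrow> bool" where
  "is_mpoly c \<longleftrightarrow> finite {\<alpha>. c \<alpha> \<noteq> 0}"

definition mpoly_eval :: "(('n::finite \<Rightarrow> nat) \<Rightarrow> complex) \<Rightarrow> complex ^ 'n \<Rightarrow> complex" where
  "mpoly_eval c z = (\<Sum>\<alpha>\<in>{\<alpha>. c \<alpha> \<noteq> 0}. c \<alpha> * (\<Prod>i\<in>UNIV. (z $ i) ^ \<alpha> i))"

definition mpoly_deg :: "(('n::finite \<Rightarrow> nat) \<Rightarrow> complex) \<Rightarrow> nat" where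
  "mpoly_deg c = Max ({sum \<alpha> UNIV | \<alpha>. c \<alpha> \<noteq> 0} \<union> {0})"

definition pmap_eval :: "('q::finite \<Rightarrow> ('n::finite \<Rightarrow> nat) \<Rightarrow> complex) \<Rightarrow> complex ^ 'n \<Rightarrow> complex ^ 'q" where
  "pmap_eval P z = (\<chi> k. mpoly_eval (P k) z)"

definition pmap_deg :: "('q::finite \<Rightarrow> ('n::finite \<Rightarrow> nat) \<Rightarrow> complex) \<Rightarrow> nat" where
  "pmap_deg P = Max (range (\<lambda>k. mpoly_deg (P k)))"

definition log_norm_pmap :: "('q::finite \<Rightarrow> ('n::finite \<Rightarrow> nat) \<Rightarrow> complex) \<Rightarrow> complex ^ 'n \<Rightarrow> ereal" where
  "log_norm_pmap P z = (if pmap_eval P z = 0 then -\<infinity> else ereal (ln (norm (pmap_eval P z))))"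

definition lojasiewicz_inf :: "('q::finite \<Rightarrow> ('n::finite \<Rightarrow> nat) \<Rightarrow> complex) \<Rightarrow> ereal" where
  "lojasiewicz_inf P = Sup {ereal l | l. \<exists>C>0. eventually
       (\<lambda>z. norm (pmap_eval P z) \<ge> C * norm z powr l) at_infinity}"

end

theory Submission
  imports Defs
begin

(* Only the growth of u at infinity matters.
   A lower bound u >= l log|z| + b near infinity gives exp(-2cu) <= C |z|^(-2cl), which is
   integrable at infinity on C^n = R^(2n) as soon as cl > n; an upper bound u <= s log|z| + b
   gives exp(-2cu) >= C |z|^(-2cs), which is not integrable there when cs < n.  Such bounds
   hold for every l < L_inf(u) and every s > sigma_u, and for a polynomial map with s = deg P
   and every l below the Lojasiewicz exponent.  Integrability of |z|^(-a) at infinity is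
   decided by summing over the dyadic shells 2^k <= |z| < 2^(k+1), whose volumes grow like
   2^(2nk). *)

definition dyadic_shell :: "nat \<Rightarrow> 'a::real_normed_vector set" where
  "dyadic_shell k = {z. 2^k \<le> norm z \<and> norm z < 2^Suc k}"

lemma dyadic_shell_borel [measurable]: "dyadic_shell k \<in> sets borel"
  unfolding dyadic_shell_def by measurable

lemma ex_dyadic_shell:
  assumes "1 \<le> norm z"
  obtains k where "z \<in> dyadic_shell k"
proof
  define k where "k = nat \<lfloor>log 2 (norm z)\<rfloor>"
  have "0 \<le> log 2 (norm z)"
    using assms by (subst zero_le_log_cancel_iff) auto
  then have "\<lfloor>log 2 (norm z)\<rfloor> = int k"
    by (simp add: k_def)
  then have "2 powr real k \<le> norm z \<and> norm z < 2 powr (real k + 1)"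
    using floor_log_eq_powr_iff[of "norm z" 2 "int k"] assms by force
  then show "z \<in> dyadic_shell k"
    by (simp add: dyadic_shell_def powr_add powr_realpow)
qed

lemma emeasure_dyadic_shell:
  "emeasure lborel (dyadic_shell k :: 'a::euclidean_space set)
     = ennreal (unit_ball_vol DIM('a) * (2^DIM('a) - 1) * (2^DIM('a))^k)"
proof -
  let ?V = "unit_ball_vol DIM('a)"
  have shell: "dyadic_shell k = ball (0::'a) (2^Suc k) - ball 0 (2^k)"
    by (auto simp: dyadic_shell_def)
  have "emeasure lborel (dyadic_shell k :: 'a set)
      = emeasure lborel (ball (0::'a) (2^Suc k)) - emeasure lborel (ball (0::'a) (2^k))"
    unfolding shell by (rule emeasure_Diff) (simp_all add: emeasure_ball subset_ball)
  also have "\<dots> = ennreal (?V * (2^Suc k) ^ DIM('a) - ?V * (2^k) ^ DIM('a))"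
    by (simp add: emeasure_ball ennreal_minus mult_left_mono power_mono)
  finally show ?thesis
    by (simp add: algebra_simps flip: power_mult)
qed

lemma nn_integral_dyadic_shell_powr:
  "(\<integral>\<^sup>+ z\<in>dyadic_shell k :: 'a::euclidean_space set. ennreal ((2^k) powr (-a)) \<partial>lborel)
     = ennreal (unit_ball_vol DIM('a) * (2^DIM('a) - 1) * (2 powr (real DIM('a) - a))^k)"
proof -
  have "((2::real)^k) powr (-a) = (2 powr (-a))^k"
    by (simp add: powr_powr mult.commute flip: powr_realpow powr_power)
  moreover have "(2::real)^DIM('a) = 2 powr real DIM('a)"
    by (simp add: powr_realpow)
  ultimately have weight: "((2::real)^k) powr (-a) * (2^DIM('a))^k = (2 powr (real DIM('a) - a))^k"
    by (simp add: power_mult_distrib[symmetric] powr_add[symmetric])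
  have "(\<integral>\<^sup>+ z\<in>dyadic_shell k :: 'a set. ennreal ((2^k) powr (-a)) \<partial>lborel)
      = ennreal ((2^k) powr (-a)) * emeasure lborel (dyadic_shell k :: 'a set)"
    by (rule nn_integral_cmult_indicator) simp
  also have "\<dots> = ennreal (unit_ball_vol DIM('a) * (2^DIM('a) - 1) *
      (((2::real)^k) powr (-a) * (2^DIM('a))^k))"
    by (simp add: emeasure_dyadic_shell ac_simps flip: ennreal_mult')
  finally show ?thesis
    by (simp only: weight)
qed

lemma ennreal_le_suminf: "(f::nat \<Rightarrow> ennreal) k \<le> (\<Sum>i. f i)"
  using ennreal_suminf_lessD not_le_imp_less by blast

lemma nn_integral_outside_compact_finite:
  fixes f :: "'a::euclidean_space \<Rightarrow> ennreal"
  assumes a: "real DIM('a) < a"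
    and f: "\<forall>\<^sub>F z in at_infinity. f z \<le> ennreal (M * norm z powr (-a))"
  obtains K where "compact K" "(\<integral>\<^sup>+ z\<in>UNIV - K. f z \<partial>lebesgue) < \<infinity>"
proof -
  obtain R where R: "\<And>z. R \<le> norm z \<Longrightarrow> f z \<le> ennreal (M * norm z powr (-a))"
    using f unfolding eventually_at_infinity by blast
  define K where "K = cball (0::'a) (max R 1)"
  define g where "g z = (\<Sum>k. ennreal ((2^k) powr (-a)) * indicator (dyadic_shell k) z)" for z :: 'a
  define V where "V = unit_ball_vol DIM('a) * (2^DIM('a) - 1)"
  define q where "q = (2::real) powr (real DIM('a) - a)"
  have bound: "f z * indicator (UNIV - K) z \<le> ennreal M * g z" for z
  proof (cases "z \<in> K")
    case False
    then have z: "R \<le> norm z" "1 \<le> norm z"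
      by (auto simp: K_def)
    then obtain k where k: "z \<in> dyadic_shell k"
      using ex_dyadic_shell by blast
    have "f z \<le> ennreal M * ennreal (norm z powr (-a))"
      using R[OF z(1)] by (simp add: ennreal_mult'')
    also have "\<dots> \<le> ennreal M * ennreal ((2^k) powr (-a))"
      using k a by (intro mult_left_mono ennreal_leI powr_mono2') (auto simp: dyadic_shell_def)
    also have "\<dots> = ennreal M * (ennreal ((2^k) powr (-a)) * indicator (dyadic_shell k) z)"
      using k by simp
    also have "\<dots> \<le> ennreal M * g z"
      unfolding g_def by (intro mult_left_mono ennreal_le_suminf) simp
    finally show ?thesis
      using False by simp
  qed simp
  have "(\<integral>\<^sup>+ z\<in>UNIV - K. f z \<partial>lebesgue) \<le> (\<integral>\<^sup>+ z. ennreal M * g z \<partial>lborel)"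
    by (simp add: nn_integral_completion nn_integral_mono bound)
  also have "\<dots> = ennreal M * (\<Sum>k. ennreal (V * q^k))"
    by (simp add: g_def nn_integral_cmult nn_integral_suminf nn_integral_dyadic_shell_powr V_def q_def)
  also have "\<dots> < \<infinity>"
    using a by (simp add: V_def q_def suminf_ennreal2 summable_mult summable_geometric
        powr_less_one ennreal_mult_less_top)
  finally show ?thesis
    by (intro that[of K]) (simp_all add: K_def)
qed

lemma nn_integral_dyadic_shell_ge:
  fixes f :: "'a::euclidean_space \<Rightarrow> ennreal"
  assumes a: "0 \<le> a" and M: "0 \<le> M"
    and f: "\<And>z. z \<in> dyadic_shell k \<Longrightarrow> ennreal (M * norm z powr (-a)) \<le> f z"
  shows "ennreal (M * 2 powr (-a) * unit_ball_vol DIM('a) * (2^DIM('a) - 1) *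
      (2 powr (real DIM('a) - a))^k) \<le> (\<integral>\<^sup>+ z\<in>dyadic_shell k. f z \<partial>lebesgue)"
proof -
  have shell_ge: "ennreal (M * 2 powr (-a)) * ennreal ((2^k) powr (-a)) \<le> f z"
    if shell: "z \<in> dyadic_shell k" for z
  proof -
    from shell have z: "2^k \<le> norm z" "norm z < 2^Suc k"
      by (auto simp: dyadic_shell_def)
    have "ennreal (M * 2 powr (-a)) * ennreal ((2^k) powr (-a)) = ennreal (M * (2^Suc k) powr (-a))"
      using M by (simp add: powr_mult flip: ennreal_mult')
    also have "\<dots> \<le> ennreal (M * norm z powr (-a))"
      using z M a by (intro ennreal_leI mult_left_mono powr_mono2') (auto simp: power_le_zero_eq)
    also have "\<dots> \<le> f z"
      using shell by (rule f)
    finally show ?thesis .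
  qed
  have "ennreal (M * 2 powr (-a) * unit_ball_vol DIM('a) * (2^DIM('a) - 1) *
      (2 powr (real DIM('a) - a))^k)
      = (\<integral>\<^sup>+ z\<in>dyadic_shell k :: 'a set.
          ennreal (M * 2 powr (-a)) * ennreal ((2^k) powr (-a)) \<partial>lborel)"
    using M by (simp add: nn_integral_cmult nn_integral_dyadic_shell_powr ennreal_mult' mult.assoc)
  also have "\<dots> = (\<integral>\<^sup>+ z\<in>dyadic_shell k :: 'a set.
      ennreal (M * 2 powr (-a)) * ennreal ((2^k) powr (-a)) \<partial>lebesgue)"
    by (simp add: nn_integral_completion)
  also have "\<dots> \<le> (\<integral>\<^sup>+ z\<in>dyadic_shell k. f z \<partial>lebesgue)"
    using shell_ge by (intro nn_integral_mono) (simp split: split_indicator)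
  finally show ?thesis .
qed

lemma nn_integral_outside_compact_infinite:
  fixes f :: "'a::euclidean_space \<Rightarrow> ennreal"
  assumes a: "0 \<le> a" "a < real DIM('a)" and M: "0 < M" and K: "compact K"
    and f: "\<forall>\<^sub>F z in at_infinity. ennreal (M * norm z powr (-a)) \<le> f z"
  shows "(\<integral>\<^sup>+ z\<in>UNIV - K. f z \<partial>lebesgue) = \<infinity>"
proof -
  obtain R where R: "\<And>z. R \<le> norm z \<Longrightarrow> ennreal (M * norm z powr (-a)) \<le> f z"
    using f unfolding eventually_at_infinity by blast
  obtain r where r: "\<And>z. z \<in> K \<Longrightarrow> norm z \<le> r"
    using compact_imp_bounded[OF K] bounded_iff by blast
  define c where "c = M * 2 powr (-a) * unit_ball_vol DIM('a) * (2^DIM('a) - 1)"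
  define q where "q = (2::real) powr (real DIM('a) - a)"
  have "1 < (2::real)^DIM('a)"
    by simp
  then have cq: "0 < c" "1 < q"
    using M a by (simp_all add: c_def q_def)
  have lower: "ennreal (c * q^k) \<le> (\<integral>\<^sup>+ z\<in>UNIV - K. f z \<partial>lebesgue)"
    if k: "max R r < 2^k" for k
  proof -
    have shell: "R \<le> norm z" "z \<notin> K" if "z \<in> dyadic_shell k" for z
      using that k r by (force simp: dyadic_shell_def)+
    have "ennreal (c * q^k) \<le> (\<integral>\<^sup>+ z\<in>dyadic_shell k. f z \<partial>lebesgue)"
      unfolding c_def q_def using a M shell by (intro nn_integral_dyadic_shell_ge R) auto
    also have "\<dots> \<le> (\<integral>\<^sup>+ z\<in>UNIV - K. f z \<partial>lebesgue)"
      using shell by (intro nn_integral_mono) (auto split: split_indicator)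
    finally show ?thesis .
  qed
  obtain k0 where "max R r < 2^k0"
    using real_arch_pow[of 2 "max R r"] by auto
  then have "\<forall>\<^sub>F k in sequentially. max R r < 2^k"
    unfolding eventually_sequentially by (meson less_le_trans one_le_numeral power_increasing)
  moreover have "filterlim (\<lambda>k. q^k) at_top sequentially"
    using filterlim_at_infinity_imp_norm_at_top[OF filterlim_realpow_sequentially_gt1[of q]] cq(2)
    by (simp add: norm_power)
  then have "(\<lambda>k. ennreal (c * q^k)) \<longlonglongrightarrow> top"
    unfolding ennreal_tendsto_top_eq_at_top
    by (rule filterlim_tendsto_pos_mult_at_top[OF tendsto_const cq(1)])
  ultimately have "top \<le> (\<integral>\<^sup>+ z\<in>UNIV - K. f z \<partial>lebesgue)"
    using lower by (intro tendsto_upperbound) (auto elim: eventually_mono)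
  then show ?thesis
    by (simp add: top_unique)
qed

lemma eventually_norm_gt_at_infinity: "\<forall>\<^sub>F z in at_infinity. r < norm (z::'a::real_normed_vector)"
  using filterlim_norm_at_top unfolding filterlim_at_top_dense by blast

lemma eventually_ln_norm_pos: "\<forall>\<^sub>F z in at_infinity. 0 < ln (norm (z::'a::real_normed_vector))"
  using eventually_norm_gt_at_infinity[of 1] by (rule eventually_mono) (rule ln_gt_zero)

(* y \<noteq> \<infinity> is needed: real_of_ereal \<infinity> = 0, so exp_weight c \<infinity> = 1. *)
lemma exp_weight_antimono:
  assumes "0 \<le> c" "x \<le> y" "y \<noteq> \<infinity>"
  shows "exp_weight c y \<le> exp_weight c x"
  using assms by (cases x; cases y) (auto simp: exp_weight_def intro!: ennreal_leI mult_left_mono)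

lemma exp_weight_log_bound:
  assumes "0 < x"
  shows "exp_weight c (ereal (l * ln x + b)) = ennreal (exp (-2 * c * b) * x powr (-(2 * c * l)))"
  using assms by (simp add: exp_weight_def powr_def algebra_simps flip: exp_add)

lemma c_inf_lower:
  assumes "0 < c" "compact K" "(\<integral>\<^sup>+ z\<in>UNIV - K. exp_weight c (u z) \<partial>lebesgue) < \<infinity>"
  shows "c_inf u \<le> ereal c"
  unfolding c_inf_def using assms by (auto intro!: Inf_lower)

lemma c_inf_greatest:
  assumes "\<And>c K. 0 < c \<Longrightarrow> compact K \<Longrightarrow>
      (\<integral>\<^sup>+ z\<in>UNIV - K. exp_weight c (u z) \<partial>lebesgue) < \<infinity> \<Longrightarrow> x \<le> ereal c"
  shows "x \<le> c_inf u"
  unfolding c_inf_def using assms by (auto intro!: Inf_greatest)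

lemma c_inf_le_of_log_lower_bound:
  fixes u :: "complex ^ 'n \<Rightarrow> ereal"
  assumes c: "0 < c" "real CARD('n) < c * l" and u: "\<And>z. u z \<noteq> \<infinity>"
    and lower: "\<forall>\<^sub>F z in at_infinity. ereal (l * ln (norm z) + b) \<le> u z"
  shows "c_inf u \<le> ereal c"
proof -
  have weight: "\<forall>\<^sub>F z in at_infinity.
      exp_weight c (u z) \<le> ennreal (exp (-2 * c * b) * norm z powr (-(2 * c * l)))"
    using lower eventually_norm_gt_at_infinity[of 0]
  proof eventually_elim
    case (elim z)
    have "exp_weight c (u z) \<le> exp_weight c (ereal (l * ln (norm z) + b))"
      using elim c u by (intro exp_weight_antimono) auto
    also have "\<dots> = ennreal (exp (-2 * c * b) * norm z powr (-(2 * c * l)))"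
      using elim by (intro exp_weight_log_bound) simp
    finally show ?case .
  qed
  obtain K where "compact K" "(\<integral>\<^sup>+ z\<in>UNIV - K. exp_weight c (u z) \<partial>lebesgue) < \<infinity>"
    by (rule nn_integral_outside_compact_finite[OF _ weight]) (use c in simp)
  then show ?thesis
    by (rule c_inf_lower[OF c(1)])
qed

lemma nn_integral_exp_weight_infinite:
  fixes u :: "complex ^ 'n \<Rightarrow> ereal"
  assumes c: "0 < c" "0 \<le> s" "c * s < real CARD('n)" and K: "compact K"
    and upper: "\<forall>\<^sub>F z in at_infinity. u z \<le> ereal (s * ln (norm z) + b)"
  shows "(\<integral>\<^sup>+ z\<in>UNIV - K. exp_weight c (u z) \<partial>lebesgue) = \<infinity>"
proof (rule nn_integral_outside_compact_infinite[OF _ _ _ K])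
  show "\<forall>\<^sub>F z in at_infinity.
      ennreal (exp (-2 * c * b) * norm z powr (-(2 * c * s))) \<le> exp_weight c (u z)"
    using upper eventually_norm_gt_at_infinity[of 0]
  proof eventually_elim
    case (elim z)
    have "ennreal (exp (-2 * c * b) * norm z powr (-(2 * c * s)))
        = exp_weight c (ereal (s * ln (norm z) + b))"
      using elim by (intro exp_weight_log_bound[symmetric]) simp
    also have "\<dots> \<le> exp_weight c (u z)"
      using elim c by (intro exp_weight_antimono) auto
    finally show ?case .
  qed
qed (use c in auto)

lemma n_over_le_c_inf:
  fixes u :: "complex ^ 'n \<Rightarrow> ereal"
  assumes r: "0 \<le> r"
    and upper: "\<And>s. r < s \<Longrightarrow> \<exists>b. \<forall>\<^sub>F z in at_infinity. u z \<le> ereal (s * ln (norm z) + b)"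
  shows "n_over CARD('n) (ereal r) \<le> c_inf u"
proof (rule c_inf_greatest)
  fix c K
  assume c: "0 < c" and K: "compact K"
    and finite: "(\<integral>\<^sup>+ z\<in>UNIV - K. exp_weight c (u z) \<partial>lebesgue) < \<infinity>"
  have "real CARD('n) / c \<le> s" if s: "r < s" for s
  proof (rule ccontr)
    assume "\<not> real CARD('n) / c \<le> s"
    then have "c * s < real CARD('n)"
      using c by (simp add: field_simps)
    moreover obtain b where "\<forall>\<^sub>F z in at_infinity. u z \<le> ereal (s * ln (norm z) + b)"
      using upper[OF s] by blast
    ultimately have "(\<integral>\<^sup>+ z\<in>UNIV - K. exp_weight c (u z) \<partial>lebesgue) = \<infinity>"
      using c K r s by (intro nn_integral_exp_weight_infinite) auto
    with finite show False
      by simp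
  qed
  then have bound: "real CARD('n) / c \<le> r"
    by (rule dense_ge)
  moreover have "0 < real CARD('n) / c"
    using c by simp
  ultimately have "0 < r"
    by linarith
  with bound c show "n_over CARD('n) (ereal r) \<le> ereal c"
    by (simp add: n_over_def field_simps)
qed

lemma n_over_less_ereal:
  assumes L: "0 \<le> L" and less: "n_over n L < ereal c" and n: "0 < n"
  shows "0 < c \<and> ereal (real n / c) < L"
proof (cases L)
  case (real r)
  with L less have "0 < r" "real n < r * c"
    by (auto simp: n_over_def field_simps split: if_splits)
  moreover from this n have "0 < c"
    by (metis of_nat_0_less_iff zero_less_mult_pos order.strict_trans)
  ultimately show ?thesis
    using real by (simp add: field_simps)
qed (use L less in \<open>auto simp: n_over_def\<close>)

lemma c_inf_le_n_over:
  fixes u :: "complex ^ 'n \<Rightarrow> ereal"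
  assumes L: "0 \<le> L" and u: "\<And>z. u z \<noteq> \<infinity>"
    and lower: "\<And>l. 0 < l \<Longrightarrow> ereal l < L \<Longrightarrow>
      \<exists>b. \<forall>\<^sub>F z in at_infinity. ereal (l * ln (norm z) + b) \<le> u z"
  shows "c_inf u \<le> n_over CARD('n) L"
proof (rule dense_ge)
  fix y
  assume y: "n_over CARD('n) L < y"
  show "c_inf u \<le> y"
  proof (cases y)
    case (real c)
    have "0 < c \<and> ereal (real CARD('n) / c) < L"
      using L y unfolding real by (rule n_over_less_ereal) simp
    then obtain l where c: "0 < c" and l: "ereal (real CARD('n) / c) < ereal l" "ereal l < L"
      by (metis ereal_dense2)
    then have cl: "real CARD('n) < c * l"
      by (simp add: field_simps)
    then have "0 < l"
      using c by (meson le_less_trans of_nat_0_le_iff zero_less_mult_pos)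
    then obtain b where "\<forall>\<^sub>F z in at_infinity. ereal (l * ln (norm z) + b) \<le> u z"
      using lower l(2) by blast
    then show ?thesis
      unfolding real using c cl u by (intro c_inf_le_of_log_lower_bound)
  qed (use y in auto)
qed

lemma eventually_le_of_log_type_less:
  assumes "log_type u < ereal s"
  shows "\<forall>\<^sub>F z in at_infinity. u z \<le> ereal (s * ln (norm z))"
  using Limsup_lessD[OF assms[unfolded log_type_def]] eventually_ln_norm_pos
proof eventually_elim
  case (elim z)
  then show ?case
    by (cases "u z") (auto simp: field_simps)
qed

lemma eventually_ge_of_less_L_inf:
  assumes "ereal l < L_inf u"
  shows "\<forall>\<^sub>F z in at_infinity. ereal (l * ln (norm z)) \<le> u z"
  using less_LiminfD[OF assms[unfolded L_inf_def]] eventually_ln_norm_pos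
proof eventually_elim
  case (elim z)
  then show ?case
    by (cases "u z") (auto simp: field_simps)
qed

lemma L_inf_nonneg:
  assumes "\<forall>\<^sub>F z in at_infinity. 0 \<le> u z"
  shows "0 \<le> L_inf u"
  unfolding L_inf_def
proof (rule Liminf_bounded)
  show "\<forall>\<^sub>F z in at_infinity. 0 \<le> u z / ereal (ln (norm z))"
    using assms eventually_ln_norm_pos
  proof eventually_elim
    case (elim z)
    then show ?case
      by (cases "u z") auto
  qed
qed

lemma L_inf_le_log_type: "L_inf u \<le> log_type u"
  unfolding L_inf_def log_type_def by (rule Liminf_le_Limsup) (rule trivial_limit_at_infinity)

lemma LPSH_star_not_PInf: "u \<in> LPSH_star \<Longrightarrow> u z \<noteq> \<infinity>"
  by (simp add: LPSH_star_def LPSH_def psh_def)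

lemma LPSH_star_eventually_pos: "u \<in> LPSH_star \<Longrightarrow> \<forall>\<^sub>F z in at_infinity. 0 < u z"
  unfolding LPSH_star_def by (auto intro: order_tendstoD(1))

lemma LPSH_star_L_inf_nonneg:
  assumes "u \<in> LPSH_star"
  shows "0 \<le> L_inf u"
  using LPSH_star_eventually_pos[OF assms] by (intro L_inf_nonneg) (auto elim: eventually_mono)

lemma LPSH_star_log_type_bounds:
  assumes "u \<in> LPSH_star"
  obtains r where "log_type u = ereal r" "0 \<le> r"
proof -
  have "0 \<le> log_type u"
    using LPSH_star_L_inf_nonneg[OF assms] L_inf_le_log_type[of u] by (rule order.trans)
  moreover have "\<bar>log_type u\<bar> \<noteq> \<infinity>"
    using assms by (simp add: LPSH_star_def LPSH_def)
  ultimately show ?thesis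
    using that by (cases "log_type u") auto
qed

lemma n_over_log_type_pos:
  fixes u :: "complex ^ 'n \<Rightarrow> ereal"
  assumes "u \<in> LPSH_star"
  shows "0 < n_over CARD('n) (log_type u)"
  using assms by (rule LPSH_star_log_type_bounds) (simp add: n_over_def)

lemma n_over_log_type_le_c_inf:
  fixes u :: "complex ^ 'n \<Rightarrow> ereal"
  assumes "u \<in> LPSH_star"
  shows "n_over CARD('n) (log_type u) \<le> c_inf u"
proof -
  obtain r where r: "log_type u = ereal r" "0 \<le> r"
    using assms by (rule LPSH_star_log_type_bounds)
  have "\<exists>b. \<forall>\<^sub>F z in at_infinity. u z \<le> ereal (s * ln (norm z) + b)" if "r < s" for s
    using eventually_le_of_log_type_less[of u s] r that by (intro exI[of _ 0]) simp
  then show ?thesis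
    unfolding r(1) using r(2) by (rule n_over_le_c_inf[rotated])
qed

lemma c_inf_le_n_over_L_inf:
  fixes u :: "complex ^ 'n \<Rightarrow> ereal"
  assumes u: "u \<in> LPSH_star"
  shows "c_inf u \<le> n_over CARD('n) (L_inf u)"
proof (rule c_inf_le_n_over)
  show "0 \<le> L_inf u"
    using u by (rule LPSH_star_L_inf_nonneg)
  show "u z \<noteq> \<infinity>" for z
    using u by (rule LPSH_star_not_PInf)
  show "\<exists>b. \<forall>\<^sub>F z in at_infinity. ereal (l * ln (norm z) + b) \<le> u z" if "ereal l < L_inf u" for l
    using eventually_ge_of_less_L_inf[OF that] by (intro exI[of _ 0]) simp
qed

lemma norm_mpoly_eval_le:
  assumes p: "is_mpoly p" and d: "mpoly_deg p \<le> d" and z: "1 \<le> norm z"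
  shows "norm (mpoly_eval p z) \<le> (\<Sum>\<alpha>\<in>{\<alpha>. p \<alpha> \<noteq> 0}. norm (p \<alpha>)) * norm z ^ d"
proof -
  have monomial: "norm (p \<alpha> * (\<Prod>i\<in>UNIV. (z $ i) ^ \<alpha> i)) \<le> norm (p \<alpha>) * norm z ^ d"
    if "p \<alpha> \<noteq> 0" for \<alpha>
  proof -
    have "sum \<alpha> UNIV \<le> mpoly_deg p"
      unfolding mpoly_deg_def using p that by (intro Max_ge) (auto simp: is_mpoly_def)
    have "norm (\<Prod>i\<in>UNIV. (z $ i) ^ \<alpha> i) = (\<Prod>i\<in>UNIV. norm (z $ i) ^ \<alpha> i)"
      by (simp add: prod_norm[symmetric] norm_power)
    also have "\<dots> \<le> (\<Prod>i\<in>UNIV. norm z ^ \<alpha> i)"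
      by (intro prod_mono conjI power_mono) (auto simp: Finite_Cartesian_Product.norm_nth_le)
    also have "\<dots> = norm z ^ sum \<alpha> UNIV"
      by (simp add: power_sum)
    also have "\<dots> \<le> norm z ^ d"
      using \<open>sum \<alpha> UNIV \<le> mpoly_deg p\<close> d z by (intro power_increasing) auto
    finally show ?thesis
      by (simp add: norm_mult mult_left_mono)
  qed
  have "norm (mpoly_eval p z) \<le> (\<Sum>\<alpha>\<in>{\<alpha>. p \<alpha> \<noteq> 0}. norm (p \<alpha> * (\<Prod>i\<in>UNIV. (z $ i) ^ \<alpha> i)))"
    unfolding mpoly_eval_def by (rule norm_sum)
  also have "\<dots> \<le> (\<Sum>\<alpha>\<in>{\<alpha>. p \<alpha> \<noteq> 0}. norm (p \<alpha>) * norm z ^ d)"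
    by (intro sum_mono monomial) simp
  finally show ?thesis
    by (simp add: sum_distrib_right)
qed

lemma norm_pmap_eval_le:
  fixes P :: "'q::finite \<Rightarrow> ('n::finite \<Rightarrow> nat) \<Rightarrow> complex"
  assumes P: "\<forall>k. is_mpoly (P k)"
  obtains C where "0 < C" "\<And>z. 1 \<le> norm z \<Longrightarrow> norm (pmap_eval P z) \<le> C * norm z ^ pmap_deg P"
proof
  define C where "C = (\<Sum>k\<in>UNIV. \<Sum>\<alpha>\<in>{\<alpha>. P k \<alpha> \<noteq> 0}. norm (P k \<alpha>))"
  show "0 < C + 1"
    unfolding C_def by (simp add: add_nonneg_pos sum_nonneg)
  fix z :: "complex ^ 'n"
  assume z: "1 \<le> norm z"
  have deg: "mpoly_deg (P k) \<le> pmap_deg P" for k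
    unfolding pmap_deg_def by (rule Max_ge) auto
  have "norm (pmap_eval P z) \<le> (\<Sum>k\<in>UNIV. norm (pmap_eval P z $ k))"
    unfolding norm_vec_def by (rule L2_set_le_sum) simp
  also have "\<dots> \<le> (\<Sum>k\<in>UNIV. (\<Sum>\<alpha>\<in>{\<alpha>. P k \<alpha> \<noteq> 0}. norm (P k \<alpha>)) * norm z ^ pmap_deg P)"
    unfolding pmap_eval_def using P z deg by (auto intro!: sum_mono norm_mpoly_eval_le)
  also have "\<dots> = C * norm z ^ pmap_deg P"
    unfolding C_def by (simp add: sum_distrib_right)
  also have "\<dots> \<le> (C + 1) * norm z ^ pmap_deg P"
    using z by (intro mult_right_mono) auto
  finally show "norm (pmap_eval P z) \<le> (C + 1) * norm z ^ pmap_deg P" .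
qed

lemma log_norm_pmap_upper_bound:
  assumes "\<forall>k. is_mpoly (P k)"
  obtains b
    where "\<forall>\<^sub>F z in at_infinity. log_norm_pmap P z \<le> ereal (real (pmap_deg P) * ln (norm z) + b)"
proof -
  obtain C where C: "0 < C" "\<And>z. 1 \<le> norm z \<Longrightarrow> norm (pmap_eval P z) \<le> C * norm z ^ pmap_deg P"
    using norm_pmap_eval_le[OF assms] by blast
  have "log_norm_pmap P z \<le> ereal (real (pmap_deg P) * ln (norm z) + ln C)" if z: "1 < norm z" for z
  proof (cases "pmap_eval P z = 0")
    case False
    have "0 < norm z"
      using z by linarith
    with False C z have "ln (norm (pmap_eval P z)) \<le> ln (C * norm z ^ pmap_deg P)"
      by (subst ln_le_cancel_iff) auto
    also have "\<dots> = real (pmap_deg P) * ln (norm z) + ln C"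
      using C \<open>0 < norm z\<close> by (simp add: ln_mult ln_realpow)
    finally show ?thesis
      using False by (simp add: log_norm_pmap_def)
  qed (simp add: log_norm_pmap_def)
  then have "\<forall>\<^sub>F z in at_infinity.
      log_norm_pmap P z \<le> ereal (real (pmap_deg P) * ln (norm z) + ln C)"
    using eventually_norm_gt_at_infinity[of 1] by (auto elim: eventually_mono)
  then show ?thesis
    by (rule that)
qed

lemma log_norm_pmap_lower_bound:
  assumes "ereal l < lojasiewicz_inf P"
  obtains b where "\<forall>\<^sub>F z in at_infinity. ereal (l * ln (norm z) + b) \<le> log_norm_pmap P z"
proof -
  obtain l' C where l': "l < l'" "0 < C"
    and ge: "\<forall>\<^sub>F z in at_infinity. C * norm z powr l' \<le> norm (pmap_eval P z)"
    using assms unfolding lojasiewicz_inf_def less_Sup_iff by auto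
  have "\<forall>\<^sub>F z in at_infinity. ereal (l * ln (norm z) + ln C) \<le> log_norm_pmap P z"
    using ge eventually_norm_gt_at_infinity[of 1]
  proof eventually_elim
    case (elim z)
    then have "0 < norm z"
      by linarith
    with elim l' have pos: "0 < C * norm z powr l'" "0 < ln (norm z)"
      by (simp_all add: ln_gt_zero)
    have "l * ln (norm z) + ln C \<le> l' * ln (norm z) + ln C"
      using l' pos by (intro add_right_mono mult_right_mono) auto
    also have "\<dots> = ln (C * norm z powr l')"
      using l' \<open>0 < norm z\<close> by (simp add: ln_mult)
    also have "\<dots> \<le> ln (norm (pmap_eval P z))"
      using elim pos by (subst ln_le_cancel_iff) auto
    finally show ?case
      using elim pos by (auto simp: log_norm_pmap_def)
  qed
  then show ?thesis
    by (rule that)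
qed

lemma lojasiewicz_inf_nonneg:
  assumes "\<forall>\<^sub>F z in at_infinity. 1 \<le> norm (pmap_eval P z)"
  shows "0 \<le> lojasiewicz_inf P"
proof -
  have "\<forall>\<^sub>F z in at_infinity. 1 * norm z powr 0 \<le> norm (pmap_eval P z)"
    using assms by (auto elim!: eventually_mono)
  then have "ereal 0 \<in> {ereal l | l. \<exists>C>0.
      \<forall>\<^sub>F z in at_infinity. C * norm z powr l \<le> norm (pmap_eval P z)}"
    using zero_less_one by blast
  then show ?thesis
    unfolding lojasiewicz_inf_def zero_ereal_def by (rule Sup_upper)
qed

lemma n_over_deg_le_c_inf_log_norm_pmap:
  fixes P :: "'q::finite \<Rightarrow> ('n::finite \<Rightarrow> nat) \<Rightarrow> complex"
  assumes "\<forall>k. is_mpoly (P k)"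
  shows "ereal (real CARD('n) / real (pmap_deg P)) \<le> c_inf (log_norm_pmap P)"
proof -
  obtain b where b: "\<forall>\<^sub>F z in at_infinity.
      log_norm_pmap P z \<le> ereal (real (pmap_deg P) * ln (norm z) + b)"
    using assms by (rule log_norm_pmap_upper_bound)
  have "\<forall>\<^sub>F z in at_infinity. log_norm_pmap P z \<le> ereal (s * ln (norm z) + b)"
    if "real (pmap_deg P) < s" for s
    using b eventually_norm_gt_at_infinity[of 1]
  proof eventually_elim
    case (elim z)
    then have "real (pmap_deg P) * ln (norm z) \<le> s * ln (norm z)"
      using that by (intro mult_right_mono) auto
    with elim(1) show ?case
      by (simp add: order.trans)
  qed
  then have "n_over CARD('n) (ereal (real (pmap_deg P))) \<le> c_inf (log_norm_pmap P)"
    by (intro n_over_le_c_inf) auto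
  then show ?thesis
    \<comment> \<open>for \<open>pmap_deg P = 0\<close> the left-hand side is the junk value \<open>n / 0 = 0\<close>\<close>
    by (cases "pmap_deg P = 0") (auto simp: n_over_def)
qed

lemma c_inf_log_norm_pmap_le_n_over_lojasiewicz_inf:
  fixes P :: "'q::finite \<Rightarrow> ('n::finite \<Rightarrow> nat) \<Rightarrow> complex"
  assumes "log_norm_pmap P \<in> LPSH_star"
  shows "c_inf (log_norm_pmap P) \<le> n_over CARD('n) (lojasiewicz_inf P)"
proof (rule c_inf_le_n_over)
  have "\<forall>\<^sub>F z in at_infinity. 1 \<le> norm (pmap_eval P z)"
    using LPSH_star_eventually_pos[OF assms]
  proof eventually_elim
    case (elim z)
    then have "pmap_eval P z \<noteq> 0" "0 < ln (norm (pmap_eval P z))"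
      by (auto simp: log_norm_pmap_def split: if_splits)
    then show ?case
      by simp
  qed
  then show "0 \<le> lojasiewicz_inf P"
    by (rule lojasiewicz_inf_nonneg)
  show "log_norm_pmap P z \<noteq> \<infinity>" for z
    by (simp add: log_norm_pmap_def)
  show "\<exists>b. \<forall>\<^sub>F z in at_infinity. ereal (l * ln (norm z) + b) \<le> log_norm_pmap P z"
    if "ereal l < lojasiewicz_inf P" for l
    using log_norm_pmap_lower_bound[OF that] by blast
qed

theorem corollary5p2:
  shows "(\<forall>u :: complex ^ 'n \<Rightarrow> ereal. u \<in> LPSH_star \<longrightarrow>
            0 < n_over CARD('n) (log_type u) \<and>
            n_over CARD('n) (log_type u) \<le> c_inf u \<and>
            c_inf u \<le> n_over CARD('n) (L_inf u) \<and>
            n_over CARD('n) (L_inf u) \<le> \<infinity>)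
       \<and> (\<forall>P :: 'q::finite \<Rightarrow> ('n \<Rightarrow> nat) \<Rightarrow> complex.
            (\<forall>k. is_mpoly (P k)) \<and> log_norm_pmap P \<in> LPSH_star \<longrightarrow>
            ereal (real CARD('n) / real (pmap_deg P)) \<le> c_inf (log_norm_pmap P) \<and>
            c_inf (log_norm_pmap P) \<le> n_over CARD('n) (lojasiewicz_inf P))"
proof -
  have "0 < n_over CARD('n) (log_type u) \<and> n_over CARD('n) (log_type u) \<le> c_inf u \<and>
      c_inf u \<le> n_over CARD('n) (L_inf u)"
    if "u \<in> LPSH_star" for u :: "complex ^ 'n \<Rightarrow> ereal"
    using that by (simp add: n_over_log_type_pos n_over_log_type_le_c_inf c_inf_le_n_over_L_inf)
  moreover have "ereal (real CARD('n) / real (pmap_deg P)) \<le> c_inf (log_norm_pmap P) \<and>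
      c_inf (log_norm_pmap P) \<le> n_over CARD('n) (lojasiewicz_inf P)"
    if "\<forall>k. is_mpoly (P k)" "log_norm_pmap P \<in> LPSH_star"
    for P :: "'q \<Rightarrow> ('n \<Rightarrow> nat) \<Rightarrow> complex"
    using that
    by (simp add: n_over_deg_le_c_inf_log_norm_pmap c_inf_log_norm_pmap_le_n_over_lojasiewicz_inf)
  ultimately show ?thesis
    by simp
qed

end
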